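(* For each $0\le m<N$ there exists a total ordering $\leqslant_m$ on the real vector space $\mathbb R\Phi$, compatible with its vector space structure, such that $\gamma_i>_m0$ for $i\le m$ and $\gamma_i<_m0$ for $i>m$.
   Context: Let $\Phi$ be a finite indecomposable root system spanning the real vector space $\mathbb R\Phi$, with simple roots $\Pi$, positive roots $\Phi^+$, $N=|\Phi^+|$, Weyl group $W$ with longest element $w_0$. Fix a reduced expression $w_0=s_{\beta_1}\cdots s_{\beta_N}$ with $\beta_i\in\Pi$, set $w_i=s_{\beta_1}\cdots s_{\beta_{i-1}}$ and $\gamma_i=w_i(\beta_i)$, so that $\Phi^+=\{\gamma_1,\dots,\gamma_N\}$ is a convex ordering (if $\gamma_i+\gamma_j=\gamma_l$ with $i<j$ then $i<l<j$). *)

theory Defs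
  imports "HOL-Analysis.Analysis"
begin

definition refl :: "'a::euclidean_space \<Rightarrow> 'a \<Rightarrow> 'a" where
  "refl a x = x - (2 * (x \<bullet> a) / (a \<bullet> a)) *\<^sub>R a"

definition refl_prod :: "'a::euclidean_space list \<Rightarrow> 'a \<Rightarrow> 'a" where
  "refl_prod bs = foldr (\<lambda>b f. refl b \<circ> f) bs id"

text \<open>(Reduced, crystallographic) root system; the ambient space is its span.\<close>
definition root_system :: "'a::euclidean_space set \<Rightarrow> bool" where
  "root_system Phi \<longleftrightarrow> finite Phi \<and> 0 \<notin> Phi
     \<and> (\<forall>a\<in>Phi. refl a ` Phi \<subseteq> Phi)
     \<and> (\<forall>a\<in>Phi. \<forall>b\<in>Phi. 2 * (b \<bullet> a) / (a \<bullet> a) \<in> \<int>)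
     \<and> (\<forall>a\<in>Phi. \<forall>c::real. c *\<^sub>R a \<in> Phi \<longrightarrow> c = 1 \<or> c = -1)"

definition indecomposable :: "'a::euclidean_space set \<Rightarrow> bool" where
  "indecomposable Phi \<longleftrightarrow> Phi \<noteq> {} \<and>
     \<not> (\<exists>A B. A \<noteq> {} \<and> B \<noteq> {} \<and> A \<union> B = Phi \<and> A \<inter> B = {}
              \<and> (\<forall>a\<in>A. \<forall>b\<in>B. a \<bullet> b = 0))"

definition is_base :: "'a::euclidean_space set \<Rightarrow> 'a set \<Rightarrow> bool" where
  "is_base Phi Sim \<longleftrightarrow> Sim \<subseteq> Phi \<and> independent Sim \<and>
     (\<forall>a\<in>Phi. \<exists>c::'a \<Rightarrow> real. a = (\<Sum>p\<in>Sim. c p *\<^sub>R p) \<and> (\<forall>p\<in>Sim. c p \<in> \<int>) \<and>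
        ((\<forall>p\<in>Sim. c p \<ge> 0) \<or> (\<forall>p\<in>Sim. c p \<le> 0)))"

definition pos_roots :: "'a::euclidean_space set \<Rightarrow> 'a set \<Rightarrow> 'a set" where
  "pos_roots Phi Sim = {a\<in>Phi. \<exists>c::'a \<Rightarrow> real. a = (\<Sum>p\<in>Sim. c p *\<^sub>R p) \<and> (\<forall>p\<in>Sim. c p \<ge> 0)}"

text \<open>Weyl group: generated by all reflections s_a, a in Phi (these are involutions,
  so the generated group is the set of finite products).\<close>
definition weyl_group :: "'a::euclidean_space set \<Rightarrow> ('a \<Rightarrow> 'a) set" where
  "weyl_group Phi = {refl_prod bs | bs. set bs \<subseteq> Phi}"

definition weyl_length :: "'a::euclidean_space set \<Rightarrow> ('a \<Rightarrow> 'a) \<Rightarrow> nat" where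
  "weyl_length Sim w = (LEAST k. \<exists>bs. set bs \<subseteq> Sim \<and> length bs = k \<and> refl_prod bs = w)"

definition longest_elt :: "'a::euclidean_space set \<Rightarrow> 'a set \<Rightarrow> ('a \<Rightarrow> 'a)" where
  "longest_elt Phi Sim = (THE w. w \<in> weyl_group Phi \<and>
       (\<forall>v\<in>weyl_group Phi. weyl_length Sim v \<le> weyl_length Sim w))"

definition reduced_expr_w0 :: "'a::euclidean_space set \<Rightarrow> 'a set \<Rightarrow> 'a list \<Rightarrow> bool" where
  "reduced_expr_w0 Phi Sim bs \<longleftrightarrow> set bs \<subseteq> Sim \<and> refl_prod bs = longest_elt Phi Sim
     \<and> length bs = weyl_length Sim (longest_elt Phi Sim)"

text \<open>gamma i (0-based, i.e. gamma_{i+1} in the paper) = s_{b1}...s_{bi}(b_{i+1}).\<close>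
definition gamma :: "'a::euclidean_space list \<Rightarrow> nat \<Rightarrow> 'a" where
  "gamma bs i = refl_prod (take i bs) (bs ! i)"

definition compatible_total_order :: "'a::real_vector set \<Rightarrow> ('a \<Rightarrow> 'a \<Rightarrow> bool) \<Rightarrow> bool" where
  "compatible_total_order S le \<longleftrightarrow>
     (\<forall>x\<in>S. le x x) \<and>
     (\<forall>x\<in>S. \<forall>y\<in>S. le x y \<and> le y x \<longrightarrow> x = y) \<and>
     (\<forall>x\<in>S. \<forall>y\<in>S. \<forall>z\<in>S. le x y \<and> le y z \<longrightarrow> le x z) \<and>
     (\<forall>x\<in>S. \<forall>y\<in>S. le x y \<or> le y x) \<and>
     (\<forall>x\<in>S. \<forall>y\<in>S. \<forall>z\<in>S. le x y \<longrightarrow> le (x + z) (y + z)) \<and>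
     (\<forall>x\<in>S. \<forall>y\<in>S. \<forall>c::real. c > 0 \<and> le x y \<longrightarrow> le (c *\<^sub>R x) (c *\<^sub>R y))"

end

theory Submission
  imports Defs
begin

text \<open>
  Let \<open>ht\<close> be the linear height functional, equal to 1 on every simple root, so that the
  positive roots are the roots of positive height. Counting inversions
  \<open>n(w) = #{\<beta> > 0. w \<beta> < 0}\<close> shows that the Weyl length of a word in simple reflections
  is its number of inversions. Hence the longest element has length \<open>N\<close>, and every
  contiguous segment \<open>c\<^sub>1 \<dots> c\<^sub>k\<close> of a reduced expression of it is again reduced,
  which forces \<open>s\<^sub>c\<^sub>1 \<cdots> s\<^sub>c\<^sub>k\<^sub>-\<^sub>1(c\<^sub>k) > 0\<close>.
  With \<open>w = s\<^sub>\<beta>\<^sub>1 \<cdots> s\<^sub>\<beta>\<^sub>m\<close>, this gives \<open>w\<^sup>-\<^sup>1 \<gamma>\<^sub>i < 0\<close> for \<open>i \<le> m\<close> and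
  \<open>w\<^sup>-\<^sup>1 \<gamma>\<^sub>i > 0\<close> for \<open>i > m\<close>, so the linear form \<open>-ht \<circ> w\<^sup>-\<^sup>1\<close> separates the two groups;
  refining its sign lexicographically by the coordinates yields the required order.
\<close>

section \<open>Reflections\<close>

lemma linear_refl: "linear (refl a)"
  unfolding refl_def
  by (rule linearI) (auto simp: inner_add_left algebra_simps add_divide_distrib
      scaleR_add_left[symmetric] simp del: scaleR_add_left)

lemma refl_refl [simp]: "a \<noteq> 0 \<Longrightarrow> refl a (refl a x) = x"
  unfolding refl_def by (simp add: inner_diff_left algebra_simps)

lemma refl_self: "a \<noteq> 0 \<Longrightarrow> refl a a = - a"
  unfolding refl_def by (simp add: algebra_simps scaleR_2)

lemma refl_inner: "a \<noteq> 0 \<Longrightarrow> refl a x \<bullet> refl a y = x \<bullet> y"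
  unfolding refl_def by (simp add: inner_diff_left inner_diff_right algebra_simps inner_commute)

lemma refl_uminus: "refl (- a) = refl a"
  unfolding refl_def by auto

lemma refl_conj_orthogonal:
  assumes "linear y" "\<And>u v. y u \<bullet> y v = u \<bullet> v"
  shows "refl (y a) (y x) = y (refl a x)"
  unfolding refl_def using assms by (simp add: linear_diff linear_scale)

lemma refl_prod_Nil [simp]: "refl_prod [] = id"
  by (simp add: refl_prod_def)

lemma refl_prod_Cons [simp]: "refl_prod (b # bs) = refl b \<circ> refl_prod bs"
  by (simp add: refl_prod_def)

lemma refl_prod_append: "refl_prod (xs @ ys) = refl_prod xs \<circ> refl_prod ys"
  by (induction xs) auto

lemma refl_prod_snoc: "refl_prod (xs @ [a]) = refl_prod xs \<circ> refl a"
  by (simp add: refl_prod_append)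

lemma linear_refl_prod: "linear (refl_prod bs)"
proof (induction bs)
  case (Cons b bs)
  then show ?case unfolding refl_prod_Cons using linear_refl linear_compose by blast
qed (simp add: linear_id[unfolded id_def])

lemma refl_prod_inner: "0 \<notin> set bs \<Longrightarrow> refl_prod bs x \<bullet> refl_prod bs y = x \<bullet> y"
  by (induction bs arbitrary: x y) (auto simp: refl_inner)

lemma refl_prod_rev_cancel [simp]: "0 \<notin> set bs \<Longrightarrow> refl_prod (rev bs) (refl_prod bs x) = x"
  by (induction bs arbitrary: x) (auto simp: refl_prod_append)

lemma refl_prod_cancel_rev [simp]: "0 \<notin> set bs \<Longrightarrow> refl_prod bs (refl_prod (rev bs) x) = x"
  using refl_prod_rev_cancel[of "rev bs"] by simp

section \<open>Lexicographic refinement of a linear form\<close>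

fun lex_nonneg :: "('a::real_vector \<Rightarrow> real) list \<Rightarrow> 'a \<Rightarrow> bool" where
  "lex_nonneg [] z = True"
| "lex_nonneg (h # hs) z = (0 < h z \<or> (h z = 0 \<and> lex_nonneg hs z))"

context
  fixes hs :: "('a::real_vector \<Rightarrow> real) list"
  assumes linear_hs: "\<forall>h\<in>set hs. linear h"
begin

lemma lex_nonneg_0: "lex_nonneg hs 0"
  using linear_hs by (induction hs) (auto simp: linear_0)

lemma lex_nonneg_add: "lex_nonneg hs x \<Longrightarrow> lex_nonneg hs y \<Longrightarrow> lex_nonneg hs (x + y)"
  using linear_hs by (induction hs) (auto simp: linear_add)

lemma lex_nonneg_or_uminus: "lex_nonneg hs x \<or> lex_nonneg hs (- x)"
  using linear_hs by (induction hs) (auto simp: linear_neg)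

lemma lex_nonneg_antisym:
  "lex_nonneg hs x \<Longrightarrow> lex_nonneg hs (- x) \<Longrightarrow> h \<in> set hs \<Longrightarrow> h x = 0"
  using linear_hs by (induction hs) (auto simp: linear_neg)

lemma lex_nonneg_scaleR: "0 < c \<Longrightarrow> lex_nonneg hs x \<Longrightarrow> lex_nonneg hs (c *\<^sub>R x)"
  using linear_hs by (induction hs) (auto simp: linear_scale)

end

lemma compatible_total_order_refining_linear_form:
  fixes g :: "'a::euclidean_space \<Rightarrow> real"
  assumes "linear g"
  obtains le where "compatible_total_order S le"
    and "\<And>x. 0 < g x \<Longrightarrow> le 0 x" and "\<And>x. g x < 0 \<Longrightarrow> le x 0"
proof -
  obtain bl where bl: "set bl = (Basis :: 'a set)"
    using finite_list[OF finite_Basis] by blast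
  define hs where "hs = g # map (\<lambda>b x. x \<bullet> b) bl"
  have lin: "\<forall>h\<in>set hs. linear h"
    using assms by (auto simp: hs_def intro: bounded_linear.linear[OF bounded_linear_inner_left])
  define le where "le x y = lex_nonneg hs (y - x)" for x y :: 'a
  have antisym: "x = y" if "le x y" "le y x" for x y
  proof -
    have "lex_nonneg hs (y - x)" "lex_nonneg hs (- (y - x))"
      using that by (simp_all add: le_def)
    then have "h (y - x) = 0" if "h \<in> set hs" for h
      using lex_nonneg_antisym[OF lin] that by blast
    then have "(y - x) \<bullet> b = 0" if "b \<in> Basis" for b
      using that bl by (auto simp: hs_def)
    then show "x = y" using euclidean_all_zero_iff[of "y - x"] by simp
  qed
  have "compatible_total_order S le"
    unfolding compatible_total_order_def
  proof (intro conjI ballI allI impI)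
    fix x y z
    show "le x x" using lex_nonneg_0[OF lin] by (simp add: le_def)
    show "le x y \<or> le y x" using lex_nonneg_or_uminus[OF lin, of "y - x"] by (simp add: le_def)
    show "le x y \<Longrightarrow> le (x + z) (y + z)" by (simp add: le_def)
    show "le x y \<and> le y x \<Longrightarrow> x = y" using antisym by blast
    show "le x y \<and> le y z \<Longrightarrow> le x z"
      using lex_nonneg_add[OF lin, of "y - x" "z - y"] by (simp add: le_def)
  next
    fix x y and c :: real
    assume "0 < c \<and> le x y"
    then show "le (c *\<^sub>R x) (c *\<^sub>R y)"
      using lex_nonneg_scaleR[OF lin, of c "y - x"] by (simp add: le_def scaleR_diff_right)
  qed
  moreover have "le 0 x" if "0 < g x" for x
    using that by (simp add: le_def hs_def)
  moreover have "le x 0" if "g x < 0" for x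
    using that linear_neg[OF assms] by (simp add: le_def hs_def)
  ultimately show thesis by (rule that)
qed

section \<open>Positive roots and the height functional\<close>

locale based_root_system =
  fixes Phi Sim :: "'a::euclidean_space set" and ht :: "'a \<Rightarrow> real"
  assumes root_system: "root_system Phi" and base: "is_base Phi Sim"
    and linear_ht: "linear ht" and ht_simple: "\<And>p. p \<in> Sim \<Longrightarrow> ht p = 1"
begin

abbreviation Pos :: "'a set" where "Pos \<equiv> pos_roots Phi Sim"

lemma finite_roots: "finite Phi"
  using root_system by (simp add: root_system_def)

lemma zero_notin_roots: "0 \<notin> Phi"
  using root_system by (simp add: root_system_def)

lemma refl_root: "a \<in> Phi \<Longrightarrow> b \<in> Phi \<Longrightarrow> refl a b \<in> Phi"
  using root_system by (auto simp: root_system_def)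

lemma cartan_integer: "a \<in> Phi \<Longrightarrow> b \<in> Phi \<Longrightarrow> 2 * (b \<bullet> a) / (a \<bullet> a) \<in> \<int>"
  using root_system by (auto simp: root_system_def)

lemma root_multiple: "a \<in> Phi \<Longrightarrow> c *\<^sub>R a \<in> Phi \<Longrightarrow> c = 1 \<or> c = -1"
  using root_system by (auto simp: root_system_def)

lemma uminus_root: "a \<in> Phi \<Longrightarrow> - a \<in> Phi"
  using refl_root[of a a] refl_self[of a] zero_notin_roots by fastforce

lemma simple_subset_roots: "Sim \<subseteq> Phi"
  using base by (simp add: is_base_def)

lemma finite_simple: "finite Sim"
  using simple_subset_roots finite_roots finite_subset by blast

lemma simple_nonzero: "p \<in> Sim \<Longrightarrow> p \<noteq> 0"
  using simple_subset_roots zero_notin_roots by blast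

lemma word_nonzero: "set xs \<subseteq> Phi \<Longrightarrow> 0 \<notin> set xs"
  using zero_notin_roots by blast

lemma simple_coeffs_unique:
  assumes "(\<Sum>p\<in>Sim. c p *\<^sub>R p) = (\<Sum>p\<in>Sim. d p *\<^sub>R p)" "q \<in> Sim"
  shows "c q = d q"
proof (rule ccontr)
  assume "c q \<noteq> d q"
  have "(\<Sum>p\<in>Sim. (c p - d p) *\<^sub>R p) = 0"
    using assms(1) by (simp add: scaleR_diff_left sum_subtractf)
  with \<open>c q \<noteq> d q\<close> assms(2) have "dependent Sim"
    unfolding dependent_finite[OF finite_simple] by (intro exI[of _ "\<lambda>p. c p - d p"]) auto
  with base show False by (simp add: is_base_def)
qed

lemma simple_expansion_single:
  assumes "q \<in> Sim" "\<And>p. p \<in> Sim \<Longrightarrow> p \<noteq> q \<Longrightarrow> c p = 0"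
  shows "(\<Sum>p\<in>Sim. c p *\<^sub>R p) = c q *\<^sub>R q"
proof -
  have "(\<Sum>p\<in>Sim. c p *\<^sub>R p) = (\<Sum>p\<in>Sim. if p = q then c q *\<^sub>R q else 0)"
    using assms(2) by (intro sum.cong) auto
  then show ?thesis using assms(1) finite_simple by simp
qed

lemma ht_expansion: "ht (\<Sum>p\<in>Sim. c p *\<^sub>R p) = (\<Sum>p\<in>Sim. c p)"
  using linear_ht ht_simple by (simp add: linear_sum linear_scale)

lemma root_expansion_nonneg:
  assumes "a \<in> Phi" "0 \<le> ht a"
  obtains c where "a = (\<Sum>p\<in>Sim. c p *\<^sub>R p)" "\<And>p. p \<in> Sim \<Longrightarrow> c p \<in> \<int> \<and> 0 \<le> c p"
proof -
  obtain c where c: "a = (\<Sum>p\<in>Sim. c p *\<^sub>R p)" "\<forall>p\<in>Sim. c p \<in> \<int>"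
    "(\<forall>p\<in>Sim. 0 \<le> c p) \<or> (\<forall>p\<in>Sim. c p \<le> 0)"
    using base assms(1) by (auto simp: is_base_def)
  have "\<forall>p\<in>Sim. 0 \<le> c p"
  proof (rule ccontr)
    assume "\<not> (\<forall>p\<in>Sim. 0 \<le> c p)"
    then have nonneg: "\<forall>p\<in>Sim. 0 \<le> - c p" using c(3) by auto
    then have "(\<Sum>p\<in>Sim. c p) \<le> 0"
      by (simp add: sum_nonpos)
    then have "(\<Sum>p\<in>Sim. - c p) = 0"
      using assms(2) c(1) ht_expansion[of c] by (simp add: sum_negf)
    with nonneg have "\<forall>p\<in>Sim. c p = 0"
      using sum_nonneg_eq_0_iff[OF finite_simple, of "\<lambda>p. - c p"] by auto
    with \<open>\<not> (\<forall>p\<in>Sim. 0 \<le> c p)\<close> show False by simp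
  qed
  with c that show thesis by blast
qed

lemma ht_root_nonzero: "a \<in> Phi \<Longrightarrow> ht a \<noteq> 0"
proof
  assume a: "a \<in> Phi" "ht a = 0"
  then obtain c where c: "a = (\<Sum>p\<in>Sim. c p *\<^sub>R p)" "\<And>p. p \<in> Sim \<Longrightarrow> 0 \<le> c p"
    using root_expansion_nonneg by (metis order_refl)
  have "(\<Sum>p\<in>Sim. c p) = 0" using a c ht_expansion by simp
  then have "\<forall>p\<in>Sim. c p = 0" using c(2) sum_nonneg_eq_0_iff[OF finite_simple] by blast
  then have "a = 0" using c(1) by simp
  with a zero_notin_roots show False by simp
qed

lemma pos_roots_iff: "a \<in> Pos \<longleftrightarrow> a \<in> Phi \<and> 0 < ht a"
proof
  assume "a \<in> Pos"
  then obtain c where "a \<in> Phi" "a = (\<Sum>p\<in>Sim. c p *\<^sub>R p)" "\<forall>p\<in>Sim. 0 \<le> c p"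
    by (auto simp: pos_roots_def)
  then show "a \<in> Phi \<and> 0 < ht a"
    using ht_expansion[of c] sum_nonneg[of Sim c] ht_root_nonzero by force
next
  assume a: "a \<in> Phi \<and> 0 < ht a"
  then obtain c where "a = (\<Sum>p\<in>Sim. c p *\<^sub>R p)" "\<And>p. p \<in> Sim \<Longrightarrow> c p \<in> \<int> \<and> 0 \<le> c p"
    using root_expansion_nonneg[of a] by auto
  with a show "a \<in> Pos" by (auto simp: pos_roots_def)
qed

lemma pos_root_expansion:
  assumes "a \<in> Pos"
  obtains c where "a = (\<Sum>p\<in>Sim. c p *\<^sub>R p)" "\<And>p. p \<in> Sim \<Longrightarrow> c p \<in> \<int> \<and> 0 \<le> c p"
  using assms root_expansion_nonneg[of a] by (auto simp: pos_roots_iff)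

lemma finite_pos: "finite Pos"
  using finite_roots by (simp add: pos_roots_def)

lemma simple_subset_pos: "Sim \<subseteq> Pos"
  using simple_subset_roots ht_simple by (auto simp: pos_roots_iff)

lemma uminus_pos_not_pos: "a \<in> Pos \<Longrightarrow> - a \<notin> Pos"
  using linear_ht by (auto simp: pos_roots_iff linear_neg)

lemma uminus_not_pos: "a \<in> Phi \<Longrightarrow> a \<notin> Pos \<Longrightarrow> - a \<in> Pos"
  using ht_root_nonzero[of a] uminus_root[of a] linear_ht by (auto simp: pos_roots_iff linear_neg)

lemma ht_root_Ints: "a \<in> Phi \<Longrightarrow> ht a \<in> \<int>"
  using base by (auto simp: is_base_def ht_expansion Ints_sum)

lemma ht_not_pos: "a \<in> Phi \<Longrightarrow> a \<notin> Pos \<Longrightarrow> ht a \<le> -1"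
proof -
  assume a: "a \<in> Phi" "a \<notin> Pos"
  then have "ht a < 0" using ht_root_nonzero[of a] by (auto simp: pos_roots_iff)
  moreover obtain k where "ht a = of_int k" using ht_root_Ints[OF a(1)] by (rule Ints_cases)
  ultimately show ?thesis by simp
qed

lemma refl_simple_pos:
  assumes \<alpha>: "\<alpha> \<in> Sim" and \<beta>: "\<beta> \<in> Pos" "\<beta> \<noteq> \<alpha>"
  shows "refl \<alpha> \<beta> \<in> Pos"
proof (rule ccontr)
  assume not_pos: "refl \<alpha> \<beta> \<notin> Pos"
  have \<alpha>_root: "\<alpha> \<in> Phi" and \<beta>_root: "\<beta> \<in> Phi"
    using \<alpha> \<beta> simple_subset_roots by (auto simp: pos_roots_iff)
  have neg_pos: "- refl \<alpha> \<beta> \<in> Pos"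
    using uminus_not_pos[OF refl_root[OF \<alpha>_root \<beta>_root] not_pos] .
  obtain d where d: "- refl \<alpha> \<beta> = (\<Sum>p\<in>Sim. d p *\<^sub>R p)"
    "\<And>p. p \<in> Sim \<Longrightarrow> d p \<in> \<int> \<and> 0 \<le> d p"
    using pos_root_expansion[OF neg_pos] by blast
  obtain c where c: "\<beta> = (\<Sum>p\<in>Sim. c p *\<^sub>R p)" "\<And>p. p \<in> Sim \<Longrightarrow> c p \<in> \<int> \<and> 0 \<le> c p"
    using pos_root_expansion[OF \<beta>(1)] by blast
  define k where "k = 2 * (\<beta> \<bullet> \<alpha>) / (\<alpha> \<bullet> \<alpha>)"
  have "(\<Sum>p\<in>Sim. (c p + d p) *\<^sub>R p) = \<beta> + - refl \<alpha> \<beta>"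
    using c(1) d(1) by (simp add: scaleR_add_left sum.distrib)
  also have "\<dots> = k *\<^sub>R \<alpha>"
    by (simp add: refl_def k_def)
  also have "\<dots> = (\<Sum>p\<in>Sim. (if p = \<alpha> then k else 0) *\<^sub>R p)"
    using simple_expansion_single[OF \<alpha>, of "\<lambda>p. if p = \<alpha> then k else 0"] by simp
  finally have expansions_eq: "(\<Sum>p\<in>Sim. (c p + d p) *\<^sub>R p) = (\<Sum>p\<in>Sim. (if p = \<alpha> then k else 0) *\<^sub>R p)" .
  have c_zero: "c p = 0" if "p \<in> Sim" "p \<noteq> \<alpha>" for p
  proof -
    have "c p + d p = 0" using simple_coeffs_unique[OF expansions_eq that(1)] that(2) by simp
    then show ?thesis using c(2) d(2) that(1) by (meson add_nonneg_eq_0_iff)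
  qed
  have \<beta>_multiple: "\<beta> = c \<alpha> *\<^sub>R \<alpha>"
    unfolding c(1) by (rule simple_expansion_single[OF \<alpha> c_zero])
  then have "c \<alpha> = 1 \<or> c \<alpha> = -1"
    using root_multiple[OF \<alpha>_root] \<beta>_root by metis
  then have "\<beta> = \<alpha>"
    using c(2)[OF \<alpha>] \<beta>_multiple by auto
  with \<beta>(2) show False by contradiction
qed

lemma refl_prod_root: "set xs \<subseteq> Phi \<Longrightarrow> a \<in> Phi \<Longrightarrow> refl_prod xs a \<in> Phi"
  by (induction xs arbitrary: a) (auto intro: refl_root)

section \<open>Inversions\<close>

definition inversions :: "('a \<Rightarrow> 'a) \<Rightarrow> 'a set" where
  "inversions w = {\<beta>\<in>Pos. w \<beta> \<notin> Pos}"

lemma finite_inversions: "finite (inversions w)"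
  using finite_pos by (simp add: inversions_def)

lemma card_inversions_le: "card (inversions w) \<le> card Pos"
  using finite_pos by (intro card_mono) (auto simp: inversions_def)

lemma refl_simple_pos_diff:
  assumes \<alpha>: "\<alpha> \<in> Sim" and x: "x \<in> Pos - {\<alpha>}"
  shows "refl \<alpha> x \<in> Pos - {\<alpha>}"
proof -
  have "refl \<alpha> x \<noteq> \<alpha>"
  proof
    assume "refl \<alpha> x = \<alpha>"
    then have "x = - \<alpha>"
      using refl_refl[OF simple_nonzero[OF \<alpha>], of x] refl_self[OF simple_nonzero[OF \<alpha>]] by simp
    then show False
      using x uminus_pos_not_pos \<alpha> simple_subset_pos by auto
  qed
  with refl_simple_pos[OF \<alpha>] x show ?thesis by blast
qed

lemma inversions_comp_refl_simple:
  assumes "\<alpha> \<in> Sim"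
  shows "inversions (w \<circ> refl \<alpha>) - {\<alpha>} = refl \<alpha> ` (inversions w - {\<alpha>})"
proof (intro equalityI subsetI)
  fix x assume x: "x \<in> inversions (w \<circ> refl \<alpha>) - {\<alpha>}"
  then have "refl \<alpha> x \<in> inversions w - {\<alpha>}"
    using refl_simple_pos_diff[OF assms] by (auto simp: inversions_def)
  moreover have "x = refl \<alpha> (refl \<alpha> x)"
    using simple_nonzero[OF assms] by simp
  ultimately show "x \<in> refl \<alpha> ` (inversions w - {\<alpha>})" by blast
next
  fix x assume "x \<in> refl \<alpha> ` (inversions w - {\<alpha>})"
  then obtain z where "z \<in> inversions w - {\<alpha>}" "x = refl \<alpha> z" by blast
  then show "x \<in> inversions (w \<circ> refl \<alpha>) - {\<alpha>}"
    using refl_simple_pos_diff[OF assms, of z] simple_nonzero[OF assms]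
    by (auto simp: inversions_def)
qed

lemma card_inversions_comp_refl_simple:
  assumes \<alpha>: "\<alpha> \<in> Sim" and w: "linear w" "w \<alpha> \<in> Phi"
  shows "w \<alpha> \<in> Pos \<Longrightarrow> card (inversions (w \<circ> refl \<alpha>)) = Suc (card (inversions w))"
    and "w \<alpha> \<notin> Pos \<Longrightarrow> Suc (card (inversions (w \<circ> refl \<alpha>))) = card (inversions w)"
proof -
  have "inj_on (refl \<alpha>) (inversions w - {\<alpha>})"
    using simple_nonzero[OF \<alpha>] by (intro inj_on_inverseI[where g = "refl \<alpha>"]) simp
  then have same_card: "card (inversions (w \<circ> refl \<alpha>) - {\<alpha>}) = card (inversions w - {\<alpha>})"
    using inversions_comp_refl_simple[OF \<alpha>] by (simp add: card_image)
  have \<alpha>_pos: "\<alpha> \<in> Pos" using \<alpha> simple_subset_pos by blast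
  have w_refl: "(w \<circ> refl \<alpha>) \<alpha> = - w \<alpha>"
    using refl_self[OF simple_nonzero[OF \<alpha>]] linear_neg[OF w(1)] by simp
  show "card (inversions (w \<circ> refl \<alpha>)) = Suc (card (inversions w))" if "w \<alpha> \<in> Pos"
  proof -
    have "\<alpha> \<in> inversions (w \<circ> refl \<alpha>)" "\<alpha> \<notin> inversions w"
      unfolding inversions_def using that w_refl uminus_pos_not_pos[OF that] \<alpha>_pos by auto
    have "card (inversions (w \<circ> refl \<alpha>)) = Suc (card (inversions (w \<circ> refl \<alpha>) - {\<alpha>}))"
      using finite_inversions \<open>\<alpha> \<in> inversions (w \<circ> refl \<alpha>)\<close> by (rule card.remove)
    also have "\<dots> = Suc (card (inversions w))"
      using same_card \<open>\<alpha> \<notin> inversions w\<close> by simp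
    finally show ?thesis .
  qed
  show "Suc (card (inversions (w \<circ> refl \<alpha>))) = card (inversions w)" if "w \<alpha> \<notin> Pos"
  proof -
    have "\<alpha> \<in> inversions w" "\<alpha> \<notin> inversions (w \<circ> refl \<alpha>)"
      unfolding inversions_def using that w_refl uminus_not_pos[OF w(2) that] \<alpha>_pos by auto
    have "card (inversions w) = Suc (card (inversions w - {\<alpha>}))"
      using finite_inversions \<open>\<alpha> \<in> inversions w\<close> by (rule card.remove)
    also have "\<dots> = Suc (card (inversions (w \<circ> refl \<alpha>)))"
      using same_card \<open>\<alpha> \<notin> inversions (w \<circ> refl \<alpha>)\<close> by simp
    finally show ?thesis by simp
  qed
qed

lemma card_inversions_snoc:
  assumes "set xs \<subseteq> Phi" "\<alpha> \<in> Sim"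
  shows "refl_prod xs \<alpha> \<in> Pos \<Longrightarrow>
      card (inversions (refl_prod (xs @ [\<alpha>]))) = Suc (card (inversions (refl_prod xs)))"
    and "refl_prod xs \<alpha> \<notin> Pos \<Longrightarrow>
      Suc (card (inversions (refl_prod (xs @ [\<alpha>])))) = card (inversions (refl_prod xs))"
  using card_inversions_comp_refl_simple[OF assms(2) linear_refl_prod
      refl_prod_root[OF assms(1)]] assms(2) simple_subset_roots
  by (auto simp: refl_prod_snoc)

lemma card_inversions_le_length: "set xs \<subseteq> Sim \<Longrightarrow> card (inversions (refl_prod xs)) \<le> length xs"
proof (induction xs rule: rev_induct)
  case (snoc a xs)
  then have "set xs \<subseteq> Phi" "a \<in> Sim" using simple_subset_roots by auto
  with snoc show ?case
    using card_inversions_snoc[of xs a] by (cases "refl_prod xs a \<in> Pos") auto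
qed (simp add: inversions_def)

text \<open>\<open>\<beta> \<mapsto> -w \<beta>\<close> injects the inversions of \<open>w\<close> into those of its inverse.\<close>
lemma card_inversions_le_inverse:
  assumes w: "linear w" "\<And>a. a \<in> Phi \<Longrightarrow> w a \<in> Phi" and inverse: "\<And>x. w' (w x) = x"
  shows "card (inversions w) \<le> card (inversions w')"
proof (rule card_inj_on_le[OF _ _ finite_inversions])
  show "inj_on (\<lambda>\<beta>. - w \<beta>) (inversions w)"
    using inverse by (intro inj_on_inverseI[where g = "\<lambda>u. w' (- u)"]) (simp add: linear_neg[OF w(1)])
  show "(\<lambda>\<beta>. - w \<beta>) ` inversions w \<subseteq> inversions w'"
  proof
    fix u assume "u \<in> (\<lambda>\<beta>. - w \<beta>) ` inversions w"
    then obtain \<beta> where \<beta>: "\<beta> \<in> Pos" "w \<beta> \<notin> Pos" "u = - w \<beta>"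
      by (auto simp: inversions_def)
    then have "u \<in> Pos" using uminus_not_pos w(2) by (simp add: pos_roots_iff)
    moreover have "w' u = - \<beta>"
      using \<beta>(3) inverse by (simp add: linear_neg[OF w(1), symmetric])
    ultimately show "u \<in> inversions w'"
      using uminus_pos_not_pos[OF \<beta>(1)] by (simp add: inversions_def)
  qed
qed

lemma card_inversions_rev:
  assumes "set xs \<subseteq> Phi"
  shows "card (inversions (refl_prod (rev xs))) = card (inversions (refl_prod xs))"
proof (rule antisym)
  have "set (rev xs) \<subseteq> Phi" using assms by simp
  then show "card (inversions (refl_prod (rev xs))) \<le> card (inversions (refl_prod xs))"
    using assms word_nonzero
    by (intro card_inversions_le_inverse[OF linear_refl_prod refl_prod_root]) simp_all
  show "card (inversions (refl_prod xs)) \<le> card (inversions (refl_prod (rev xs)))"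
    using assms word_nonzero
    by (intro card_inversions_le_inverse[OF linear_refl_prod refl_prod_root]) simp_all
qed

lemma exchange_condition:
  "set xs \<subseteq> Sim \<Longrightarrow> \<alpha> \<in> Sim \<Longrightarrow> refl_prod xs \<alpha> \<notin> Pos \<Longrightarrow>
    \<exists>us c ws. xs = us @ c # ws \<and> refl_prod xs \<circ> refl \<alpha> = refl_prod (us @ ws)"
proof (induction xs)
  case Nil
  then show ?case using simple_subset_pos by auto
next
  case (Cons b ys)
  have ys: "set ys \<subseteq> Sim" and b: "b \<in> Sim" using Cons.prems by auto
  let ?y = "refl_prod ys"
  show ?case
  proof (cases "?y \<alpha> \<in> Pos")
    case False
    from Cons.IH[OF ys Cons.prems(2) False] obtain us c ws where
      "ys = us @ c # ws" "?y \<circ> refl \<alpha> = refl_prod (us @ ws)" by blast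
    then have "b # ys = (b # us) @ c # ws"
      and "refl_prod (b # ys) \<circ> refl \<alpha> = refl_prod ((b # us) @ ws)"
      by (simp_all add: comp_assoc)
    then show ?thesis by blast
  next
    case True
    then have y\<alpha>: "?y \<alpha> = b"
      using refl_simple_pos[OF b True] Cons.prems(3) by auto
    have "refl_prod (b # ys) \<circ> refl \<alpha> = ?y"
    proof
      fix x
      have "refl (?y \<alpha>) (?y (refl \<alpha> x)) = ?y (refl \<alpha> (refl \<alpha> x))"
        using refl_prod_inner[OF word_nonzero] ys simple_subset_roots
        by (intro refl_conj_orthogonal[OF linear_refl_prod]) auto
      then show "(refl_prod (b # ys) \<circ> refl \<alpha>) x = ?y x"
        using y\<alpha> simple_nonzero[OF Cons.prems(2)] by simp
    qed
    then show ?thesis by (metis append_Nil)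
  qed
qed

lemma exists_word_length_le_inversions:
  "set xs \<subseteq> Sim \<Longrightarrow>
    \<exists>zs. set zs \<subseteq> Sim \<and> refl_prod zs = refl_prod xs \<and> length zs \<le> card (inversions (refl_prod xs))"
proof (induction xs rule: rev_induct)
  case Nil
  then show ?case by (intro exI[of _ "[]"]) simp
next
  case (snoc a xs)
  then have xs: "set xs \<subseteq> Sim" "a \<in> Sim" "set xs \<subseteq> Phi" using simple_subset_roots by auto
  from snoc.IH[OF xs(1)] obtain zs where
    zs: "set zs \<subseteq> Sim" "refl_prod zs = refl_prod xs" "length zs \<le> card (inversions (refl_prod xs))"
    by blast
  show ?case
  proof (cases "refl_prod xs a \<in> Pos")
    case True
    have "refl_prod (zs @ [a]) = refl_prod (xs @ [a])"
      using zs(2) by (simp only: refl_prod_snoc)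
    moreover have "length (zs @ [a]) \<le> card (inversions (refl_prod (xs @ [a])))"
      using card_inversions_snoc(1)[OF xs(3,2) True] zs(3) by simp
    ultimately show ?thesis
      using zs(1) xs(2) by (intro exI[of _ "zs @ [a]"]) simp
  next
    case False
    then obtain us c ws where "zs = us @ c # ws" "refl_prod zs \<circ> refl a = refl_prod (us @ ws)"
      using exchange_condition[OF zs(1) xs(2)] zs(2) by auto
    then show ?thesis
      using card_inversions_snoc(2)[OF xs(3,2) False] zs
      by (intro exI[of _ "us @ ws"]) (auto simp: refl_prod_snoc)
  qed
qed

lemma weyl_length_refl_prod:
  assumes "set xs \<subseteq> Sim"
  shows "weyl_length Sim (refl_prod xs) = card (inversions (refl_prod xs))"
  unfolding weyl_length_def
proof (rule Least_equality)
  obtain zs where zs: "set zs \<subseteq> Sim" "refl_prod zs = refl_prod xs"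
    "length zs \<le> card (inversions (refl_prod xs))"
    using exists_word_length_le_inversions[OF assms] by blast
  then have "length zs = card (inversions (refl_prod xs))"
    using card_inversions_le_length[OF zs(1)] by simp
  with zs show "\<exists>bs. set bs \<subseteq> Sim \<and> length bs = card (inversions (refl_prod xs)) \<and>
      refl_prod bs = refl_prod xs"
    by blast
next
  show "card (inversions (refl_prod xs)) \<le> k"
    if "\<exists>bs. set bs \<subseteq> Sim \<and> length bs = k \<and> refl_prod bs = refl_prod xs" for k
    using that card_inversions_le_length by force
qed

section \<open>The Weyl group is generated by simple reflections\<close>

lemma exists_simple_lowering:
  assumes a: "a \<in> Pos" "a \<notin> Sim"
  obtains \<alpha> where "\<alpha> \<in> Sim" "refl \<alpha> a \<in> Pos" "ht (refl \<alpha> a) \<le> ht a - 1"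
proof -
  have a_root: "a \<in> Phi" using a(1) by (simp add: pos_roots_iff)
  obtain c where c: "a = (\<Sum>p\<in>Sim. c p *\<^sub>R p)" "\<And>p. p \<in> Sim \<Longrightarrow> c p \<in> \<int> \<and> 0 \<le> c p"
    using pos_root_expansion[OF a(1)] by blast
  have "0 < a \<bullet> a" using a_root zero_notin_roots by auto
  also have "a \<bullet> a = (\<Sum>p\<in>Sim. c p * (a \<bullet> p))"
    by (subst (2) c(1)) (simp add: inner_sum_right)
  finally obtain \<alpha> where \<alpha>: "\<alpha> \<in> Sim" "0 < a \<bullet> \<alpha>"
    using c(2) sum_nonpos[of Sim "\<lambda>p. c p * (a \<bullet> p)"] mult_nonneg_nonpos
    by (metis (no_types, lifting) not_le)
  define k where "k = 2 * (a \<bullet> \<alpha>) / (\<alpha> \<bullet> \<alpha>)"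
  have "k \<in> \<int>" "0 < k"
    using cartan_integer[of \<alpha> a] \<alpha> a_root simple_subset_roots simple_nonzero[OF \<alpha>(1)]
    by (auto simp: k_def)
  then have "1 \<le> k" by (auto elim: Ints_cases)
  moreover have "ht (refl \<alpha> a) = ht a - k"
    using linear_ht ht_simple[OF \<alpha>(1)] by (simp add: refl_def k_def linear_diff linear_scale)
  ultimately have "ht (refl \<alpha> a) \<le> ht a - 1" by simp
  moreover have "refl \<alpha> a \<in> Pos"
    using refl_simple_pos[OF \<alpha>(1) a(1)] \<alpha>(1) a(2) by blast
  ultimately show thesis using \<alpha>(1) that by blast
qed

lemma pos_root_conj_simple:
  "a \<in> Pos \<Longrightarrow> \<exists>ws \<alpha>. set ws \<subseteq> Sim \<and> \<alpha> \<in> Sim \<and> a = refl_prod ws \<alpha>"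
proof (induction "nat \<lceil>ht a\<rceil>" arbitrary: a rule: less_induct)
  case less
  show ?case
  proof (cases "a \<in> Sim")
    case True
    then show ?thesis by (intro exI[of _ "[]"] exI[of _ a]) simp
  next
    case False
    then obtain \<alpha> where \<alpha>: "\<alpha> \<in> Sim" "refl \<alpha> a \<in> Pos" "ht (refl \<alpha> a) \<le> ht a - 1"
      using exists_simple_lowering[OF less.prems] by blast
    moreover have "0 < ht (refl \<alpha> a)" using \<alpha>(2) by (simp add: pos_roots_iff)
    ultimately have "nat \<lceil>ht (refl \<alpha> a)\<rceil> < nat \<lceil>ht a\<rceil>"
      by linarith
    then obtain ws \<alpha>' where ws: "set ws \<subseteq> Sim" "\<alpha>' \<in> Sim" "refl \<alpha> a = refl_prod ws \<alpha>'"
      using less.hyps \<alpha>(2) by blast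
    have "a = refl_prod (\<alpha> # ws) \<alpha>'"
      using ws(3)[symmetric] simple_nonzero[OF \<alpha>(1)] by simp
    with ws \<alpha>(1) show ?thesis by (intro exI[of _ "\<alpha> # ws"] exI[of _ \<alpha>']) simp
  qed
qed

lemma refl_root_simple_word:
  assumes "a \<in> Phi"
  obtains ws where "set ws \<subseteq> Sim" "refl a = refl_prod ws"
proof -
  obtain b where b: "b \<in> Pos" "refl a = refl b"
    using assms uminus_not_pos refl_uminus by metis
  obtain ws \<alpha> where ws: "set ws \<subseteq> Sim" "\<alpha> \<in> Sim" "b = refl_prod ws \<alpha>"
    using pos_root_conj_simple[OF b(1)] by blast
  have nonzero: "0 \<notin> set ws" and orth: "\<And>u v. refl_prod ws u \<bullet> refl_prod ws v = u \<bullet> v"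
    using ws(1) simple_subset_roots word_nonzero refl_prod_inner by blast+
  have "refl b = refl_prod (ws @ [\<alpha>] @ rev ws)"
  proof
    fix x
    have "refl b x = refl (refl_prod ws \<alpha>) (refl_prod ws (refl_prod (rev ws) x))"
      using ws(3) nonzero by simp
    also have "\<dots> = refl_prod ws (refl \<alpha> (refl_prod (rev ws) x))"
      by (rule refl_conj_orthogonal[OF linear_refl_prod orth])
    finally show "refl b x = refl_prod (ws @ [\<alpha>] @ rev ws) x" by (simp add: refl_prod_append)
  qed
  then show thesis using b(2) ws(1,2) by (intro that[of "ws @ [\<alpha>] @ rev ws"]) auto
qed

lemma weyl_group_simple_word:
  assumes "w \<in> weyl_group Phi"
  obtains ws where "set ws \<subseteq> Sim" "w = refl_prod ws"
proof -
  obtain bs where bs: "w = refl_prod bs" "set bs \<subseteq> Phi"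
    using assms by (auto simp: weyl_group_def)
  have "\<exists>ws. set ws \<subseteq> Sim \<and> refl_prod bs = refl_prod ws"
    using bs(2)
  proof (induction bs)
    case Nil
    then show ?case by (intro exI[of _ "[]"]) simp
  next
    case (Cons b bs)
    then obtain ws where "set ws \<subseteq> Sim" "refl_prod bs = refl_prod ws"
      by auto
    moreover obtain vs where "set vs \<subseteq> Sim" "refl b = refl_prod vs"
      using refl_root_simple_word[of b] Cons.prems by auto
    ultimately show ?case by (intro exI[of _ "vs @ ws"]) (simp add: refl_prod_append)
  qed
  then show thesis using that bs(1) by blast
qed

lemma refl_prod_in_weyl_group: "set ws \<subseteq> Sim \<Longrightarrow> refl_prod ws \<in> weyl_group Phi"
  using simple_subset_roots by (auto simp: weyl_group_def)

section \<open>The longest element\<close>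

lemma inverts_all_if_inverts_simple:
  assumes w: "linear w" "\<And>a. a \<in> Phi \<Longrightarrow> w a \<in> Phi"
    and simple: "\<And>p. p \<in> Sim \<Longrightarrow> w p \<notin> Pos" and \<beta>: "\<beta> \<in> Pos"
  shows "w \<beta> \<notin> Pos"
proof -
  obtain c where c: "\<beta> = (\<Sum>p\<in>Sim. c p *\<^sub>R p)" "\<And>p. p \<in> Sim \<Longrightarrow> c p \<in> \<int> \<and> 0 \<le> c p"
    using pos_root_expansion[OF \<beta>] by blast
  have "ht (w \<beta>) = (\<Sum>p\<in>Sim. c p * ht (w p))"
    unfolding c(1)
    by (simp add: linear_sum[OF w(1)] linear_scale[OF w(1)] linear_sum[OF linear_ht]
        linear_scale[OF linear_ht])
  also have "\<dots> \<le> (\<Sum>p\<in>Sim. c p * (-1))"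
    using c(2) ht_not_pos w(2) simple simple_subset_roots
    by (intro sum_mono mult_left_mono) auto
  also have "\<dots> = - ht \<beta>"
    unfolding c(1) ht_expansion by (simp add: sum_negf)
  finally show ?thesis using \<beta> by (simp add: pos_roots_iff)
qed

lemma exists_word_inversions:
  "k \<le> card Pos \<Longrightarrow> \<exists>xs. set xs \<subseteq> Sim \<and> length xs = k \<and> card (inversions (refl_prod xs)) = k"
proof (induction k)
  case 0
  then show ?case by (intro exI[of _ "[]"]) (simp add: inversions_def)
next
  case (Suc k)
  then obtain xs where xs: "set xs \<subseteq> Sim" "length xs = k" "card (inversions (refl_prod xs)) = k"
    by auto
  have "\<exists>\<alpha>\<in>Sim. refl_prod xs \<alpha> \<in> Pos"
  proof (rule ccontr)
    assume no_simple: "\<not> (\<exists>\<alpha>\<in>Sim. refl_prod xs \<alpha> \<in> Pos)"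
    have xs_roots: "set xs \<subseteq> Phi" using xs(1) simple_subset_roots by blast
    have "refl_prod xs \<beta> \<notin> Pos" if "\<beta> \<in> Pos" for \<beta>
      using inverts_all_if_inverts_simple[OF linear_refl_prod refl_prod_root[OF xs_roots]]
        no_simple that by blast
    then have "inversions (refl_prod xs) = Pos"
      by (auto simp: inversions_def)
    with xs(3) Suc.prems show False by simp
  qed
  then obtain \<alpha> where \<alpha>: "\<alpha> \<in> Sim" "refl_prod xs \<alpha> \<in> Pos" by blast
  have "card (inversions (refl_prod (xs @ [\<alpha>]))) = Suc k"
    using card_inversions_snoc(1)[OF _ \<alpha>] xs(1,3) simple_subset_roots by auto
  with xs(1,2) \<alpha>(1) show ?case
    by (intro exI[of _ "xs @ [\<alpha>]"]) simp
qed

lemma inversions_eq_pos: "card (inversions w) = card Pos \<Longrightarrow> inversions w = Pos"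
  using finite_pos by (intro card_subset_eq) (auto simp: inversions_def)

lemma refl_prod_eq_id_if_no_inversions:
  assumes "set xs \<subseteq> Sim" "inversions (refl_prod xs) = {}"
  shows "refl_prod xs = id"
proof -
  obtain zs where "refl_prod zs = refl_prod xs" "length zs \<le> card (inversions (refl_prod xs))"
    using exists_word_length_le_inversions[OF assms(1)] by blast
  then show ?thesis using assms(2) by simp
qed

lemma refl_prod_eq_if_all_inverted:
  assumes xs: "set xs \<subseteq> Sim" "inversions (refl_prod xs) = Pos"
    and ys: "set ys \<subseteq> Sim" "inversions (refl_prod ys) = Pos"
  shows "refl_prod xs = refl_prod ys"
proof -
  let ?x = "refl_prod xs" and ?y = "refl_prod ys" and ?y' = "refl_prod (rev ys)"
  have ys_nonzero: "0 \<notin> set ys" using ys(1) simple_subset_roots word_nonzero by blast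
  have "inversions (refl_prod (rev ys @ xs)) = {}"
  proof (rule ccontr)
    assume "inversions (refl_prod (rev ys @ xs)) \<noteq> {}"
    then obtain \<beta> where \<beta>: "\<beta> \<in> Pos" "?y' (?x \<beta>) \<notin> Pos"
      by (auto simp: inversions_def refl_prod_append)
    have "\<beta> \<in> inversions ?x" using \<beta>(1) xs(2) by simp
    then have x\<beta>: "?x \<beta> \<in> Phi" "?x \<beta> \<notin> Pos"
      using xs(1) simple_subset_roots by (auto simp: inversions_def pos_roots_iff intro: refl_prod_root)
    have "?y' (?x \<beta>) \<in> Phi"
      using refl_prod_root[of "rev ys" "?x \<beta>"] x\<beta>(1) ys(1) simple_subset_roots by auto
    then have "- ?y' (?x \<beta>) \<in> Pos" using \<beta>(2) uminus_not_pos by blast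
    then have "?y (- ?y' (?x \<beta>)) \<notin> Pos" using ys(2) by (auto simp: inversions_def)
    moreover have "?y (- ?y' (?x \<beta>)) = - ?x \<beta>"
      using ys_nonzero by (simp add: linear_neg[OF linear_refl_prod])
    ultimately show False using uminus_not_pos[OF x\<beta>] by simp
  qed
  then have "?y' \<circ> ?x = id"
    using refl_prod_eq_id_if_no_inversions[of "rev ys @ xs"] xs(1) ys(1)
    by (simp add: refl_prod_append)
  show ?thesis
  proof
    fix t
    have "?x t = ?y (?y' (?x t))" using ys_nonzero by simp
    also have "\<dots> = ?y t" using fun_cong[OF \<open>?y' \<circ> ?x = id\<close>, of t] by simp
    finally show "?x t = ?y t" .
  qed
qed

lemma longest_elt_eq:
  assumes xs: "set xs \<subseteq> Sim" "card (inversions (refl_prod xs)) = card Pos"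
  shows "longest_elt Phi Sim = refl_prod xs"
  unfolding longest_elt_def
proof (rule the_equality)
  have "weyl_length Sim v \<le> weyl_length Sim (refl_prod xs)" if v: "v \<in> weyl_group Phi" for v
  proof -
    obtain vs where "set vs \<subseteq> Sim" "v = refl_prod vs"
      using weyl_group_simple_word[OF v] by blast
    then show ?thesis
      using weyl_length_refl_prod xs card_inversions_le[of v] by simp
  qed
  then show "refl_prod xs \<in> weyl_group Phi \<and>
      (\<forall>v\<in>weyl_group Phi. weyl_length Sim v \<le> weyl_length Sim (refl_prod xs))"
    using refl_prod_in_weyl_group[OF xs(1)] by blast
next
  fix w assume w: "w \<in> weyl_group Phi \<and> (\<forall>v\<in>weyl_group Phi. weyl_length Sim v \<le> weyl_length Sim w)"
  then obtain ws where ws: "set ws \<subseteq> Sim" "w = refl_prod ws"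
    using weyl_group_simple_word by blast
  have "weyl_length Sim (refl_prod xs) \<le> weyl_length Sim w"
    using w refl_prod_in_weyl_group[OF xs(1)] by blast
  then have "card Pos \<le> card (inversions w)"
    using weyl_length_refl_prod[OF xs(1)] weyl_length_refl_prod[OF ws(1)] ws(2) xs(2) by simp
  then have "inversions w = Pos"
    using card_inversions_le[of w] inversions_eq_pos by simp
  then show "w = refl_prod xs"
    using refl_prod_eq_if_all_inverted[OF ws(1) _ xs(1) inversions_eq_pos[OF xs(2)]] ws(2) by simp
qed

section \<open>Reduced words\<close>

definition reduced_word :: "'a list \<Rightarrow> bool" where
  "reduced_word xs \<longleftrightarrow> set xs \<subseteq> Sim \<and> card (inversions (refl_prod xs)) = length xs"

lemma reduced_word_snoc:
  assumes "reduced_word (xs @ [\<alpha>])"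
  shows "reduced_word xs" "refl_prod xs \<alpha> \<in> Pos"
proof -
  have xs: "set xs \<subseteq> Sim" "set xs \<subseteq> Phi" "\<alpha> \<in> Sim"
    and n: "card (inversions (refl_prod (xs @ [\<alpha>]))) = Suc (length xs)"
    using assms simple_subset_roots by (auto simp: reduced_word_def)
  show pos: "refl_prod xs \<alpha> \<in> Pos"
  proof (rule ccontr)
    assume "refl_prod xs \<alpha> \<notin> Pos"
    with n card_inversions_snoc(2)[OF xs(2,3)] card_inversions_le_length[OF xs(1)]
    show False by simp
  qed
  show "reduced_word xs"
    using card_inversions_snoc(1)[OF xs(2,3) pos] n xs(1) by (simp add: reduced_word_def)
qed

lemma reduced_word_rev: "reduced_word xs \<Longrightarrow> reduced_word (rev xs)"
  using card_inversions_rev simple_subset_roots by (auto simp: reduced_word_def)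

lemma reduced_word_prefix: "reduced_word (xs @ ys) \<Longrightarrow> reduced_word xs"
proof (induction ys rule: rev_induct)
  case (snoc y ys)
  then show ?case using reduced_word_snoc(1)[of "xs @ ys" y] by simp
qed simp

lemma reduced_word_suffix: "reduced_word (xs @ ys) \<Longrightarrow> reduced_word ys"
  using reduced_word_prefix[of "rev ys" "rev xs"] reduced_word_rev[of "xs @ ys"]
    reduced_word_rev[of "rev ys"]
  by simp

lemma reduced_word_infix: "reduced_word (xs @ ys @ zs) \<Longrightarrow> reduced_word ys"
  using reduced_word_prefix[of "xs @ ys" zs] reduced_word_suffix[of xs ys] by simp

lemma reduced_expr_w0_reduced_word:
  assumes "reduced_expr_w0 Phi Sim bs"
  shows "reduced_word bs" "length bs = card Pos"
proof -
  obtain xs where xs: "set xs \<subseteq> Sim" "length xs = card Pos" "card (inversions (refl_prod xs)) = card Pos"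
    using exists_word_inversions[of "card Pos"] by auto
  have bs: "set bs \<subseteq> Sim" "refl_prod bs = refl_prod xs"
    "length bs = weyl_length Sim (refl_prod xs)"
    using assms longest_elt_eq[OF xs(1,3)] by (auto simp: reduced_expr_w0_def)
  then show "length bs = card Pos"
    using weyl_length_refl_prod[OF xs(1)] xs(3) by simp
  with bs xs(3) show "reduced_word bs" by (simp add: reduced_word_def)
qed

lemma reduced_word_gamma_before:
  assumes bs: "reduced_word bs" and i: "i < m" "m \<le> length bs"
  shows "- refl_prod (rev (take m bs)) (gamma bs i) \<in> Pos"
proof -
  define b D where "b = bs ! i" and "D = drop (Suc i) (take m bs)"
  have "take (Suc i) (take m bs) = take i bs @ [b]"
    using i by (simp add: b_def take_Suc_conv_app_nth min_def)
  then have split: "take m bs = take i bs @ b # D"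
    using append_take_drop_id[of "Suc i" "take m bs"] by (simp add: D_def)
  then have "bs = take i bs @ (b # D) @ drop m bs"
    using append_take_drop_id[of m bs] by simp
  then have "reduced_word (rev (b # D))"
    using reduced_word_infix bs reduced_word_rev by metis
  then have pos: "refl_prod (rev D) b \<in> Pos"
    by (simp add: reduced_word_snoc)
  have nonzero: "0 \<notin> set bs"
    using bs simple_nonzero unfolding reduced_word_def by blast
  moreover have "b \<in> set bs"
    using i by (simp add: b_def)
  ultimately have "b \<noteq> 0" "0 \<notin> set (take i bs)"
    by (auto dest: in_set_takeD)
  then have "refl_prod (rev (take m bs)) (gamma bs i) = refl_prod (rev D) (refl b b)"
    unfolding gamma_def b_def[symmetric] split by (simp add: refl_prod_append)
  also have "\<dots> = - refl_prod (rev D) b"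
    using \<open>b \<noteq> 0\<close> by (simp add: refl_self linear_neg[OF linear_refl_prod])
  finally show ?thesis using pos by simp
qed

lemma reduced_word_gamma_after:
  assumes bs: "reduced_word bs" and i: "m \<le> i" "i < length bs"
  shows "refl_prod (rev (take m bs)) (gamma bs i) \<in> Pos"
proof -
  define E where "E = drop m (take i bs)"
  have split: "take i bs = take m bs @ E"
    using i append_take_drop_id[of m "take i bs"] by (simp add: E_def min_def)
  then have "bs = take m bs @ (E @ [bs ! i]) @ drop (Suc i) bs"
    using i append_take_drop_id[of "Suc i" bs] by (simp add: take_Suc_conv_app_nth)
  then have "reduced_word (E @ [bs ! i])"
    using reduced_word_infix bs by metis
  then have "refl_prod E (bs ! i) \<in> Pos" by (rule reduced_word_snoc)
  moreover have "0 \<notin> set (take m bs)"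
    using bs simple_nonzero unfolding reduced_word_def by (blast dest: in_set_takeD)
  ultimately show ?thesis
    unfolding gamma_def split by (simp add: refl_prod_append)
qed

end

theorem lemma3p3p2:
  fixes Phi Sim :: "'a::euclidean_space set" and bs :: "'a list" and m :: nat
  assumes "root_system Phi" and "indecomposable Phi"
    and "is_base Phi Sim"
    and "reduced_expr_w0 Phi Sim bs"
    and "m < card (pos_roots Phi Sim)"
  shows "\<exists>le. compatible_total_order (span Phi) le \<and>
     (\<forall>i < card (pos_roots Phi Sim).
        (i < m \<longrightarrow> le 0 (gamma bs i) \<and> gamma bs i \<noteq> 0) \<and>
        (m \<le> i \<longrightarrow> le (gamma bs i) 0 \<and> gamma bs i \<noteq> 0))"
proof -
  obtain ht :: "'a \<Rightarrow> real" where ht: "linear ht" "\<forall>p\<in>Sim. ht p = 1"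
    using linear_independent_extend[of Sim "\<lambda>_. 1"] assms(3) by (auto simp: is_base_def)
  interpret based_root_system Phi Sim ht
    by (rule based_root_system.intro) (use assms(1,3) ht in auto)
  have bs: "reduced_word bs" "length bs = card Pos"
    using reduced_expr_w0_reduced_word[OF assms(4)] by simp_all
  define g where "g x = - ht (refl_prod (rev (take m bs)) x)" for x
  have "linear g"
    unfolding g_def by (intro linearI) (simp_all add: linear_add[OF linear_refl_prod]
        linear_scale[OF linear_refl_prod] linear_add[OF ht(1)] linear_scale[OF ht(1)])
  then obtain le where le: "compatible_total_order (span Phi) le"
    "\<And>x. 0 < g x \<Longrightarrow> le 0 x" "\<And>x. g x < 0 \<Longrightarrow> le x 0"
    using compatible_total_order_refining_linear_form by blast
  have "0 < g (gamma bs i)" if "i < m" for i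
    using reduced_word_gamma_before[OF bs(1) that] assms(5) bs(2) ht(1)
    by (simp add: g_def pos_roots_iff linear_neg)
  moreover have "g (gamma bs i) < 0" if "m \<le> i" "i < card Pos" for i
    using reduced_word_gamma_after[OF bs(1) that(1)] that(2) bs(2)
    by (simp add: g_def pos_roots_iff)
  ultimately show ?thesis
    using le linear_0[OF \<open>linear g\<close>] by (metis less_irrefl not_le)
qed

end
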